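(* Let $\mathcal{X}=\{1,\dots,n\}$ and $\pi$ a probability mass function on $\mathcal{X}$ with full support, ordered so that $\pi(1)\le\pi(2)\le\dots\le\pi(n)$. Fix $k\in\{1,\dots,n\}$ and let $(\mathcal{O}_i)_{i=1}^k$ be the partition with $\mathcal{O}_i=\{i\}$ for $1\le i\le k-1$ and $\mathcal{O}_k=\{k,k+1,\dots,n\}$. Then the Gibbs kernel $G_{\mathcal{O}}$ of $(\mathcal{O}_i)_{i=1}^k$ minimises $D^\pi_{KL}(G\|\Pi)$ among all Gibbs kernels with $k$ orbits: for any partition $(\mathcal{C}_i)_{i=1}^k$ of $\mathcal{X}$ into $k$ blocks, $D^\pi_{KL}(G_{\mathcal{O}}\|\Pi)\le D^\pi_{KL}(G_{\mathcal{C}}\|\Pi)$.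
   Context: For a partition $(\mathcal{C}_i)$ of $\mathcal{X}$ (the orbits of some group action), its Gibbs kernel is $G_{\mathcal{C}}(x,y)=\pi(y)/\pi(\mathcal{C}(x))$ if $y$ lies in the block $\mathcal{C}(x)$ containing $x$, and $0$ otherwise, where $\pi(A)=\sum_{z\in A}\pi(z)$. $\Pi$ is the matrix with all rows equal to $\pi$, and $D^\pi_{KL}(P\|Q)=\sum_{x,y}\pi(x)P(x,y)\log\frac{P(x,y)}{Q(x,y)}$ with $0\log(0/a)=0$. *)

theory Defs
  imports "HOL-Analysis.Analysis" "HOL-Library.Disjoint_Sets"
begin

definition pmass :: "(nat \<Rightarrow> real) \<Rightarrow> nat set \<Rightarrow> real" where
  "pmass \<pi> A = (\<Sum>z\<in>A. \<pi> z)"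

definition block_of :: "nat set set \<Rightarrow> nat \<Rightarrow> nat set" where
  "block_of P x = (THE C. C \<in> P \<and> x \<in> C)"

definition gibbs_kernel :: "(nat \<Rightarrow> real) \<Rightarrow> nat set set \<Rightarrow> nat \<Rightarrow> nat \<Rightarrow> real" where
  "gibbs_kernel \<pi> P x y =
     (if y \<in> block_of P x then \<pi> y / pmass \<pi> (block_of P x) else 0)"

definition Pi_mat :: "(nat \<Rightarrow> real) \<Rightarrow> nat \<Rightarrow> nat \<Rightarrow> real" where
  "Pi_mat \<pi> x y = \<pi> y"

definition KL_pi :: "nat set \<Rightarrow> (nat \<Rightarrow> real) \<Rightarrow> (nat \<Rightarrow> nat \<Rightarrow> real)
                       \<Rightarrow> (nat \<Rightarrow> nat \<Rightarrow> real) \<Rightarrow> real" where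
  "KL_pi X \<pi> P Q = (\<Sum>x\<in>X. \<Sum>y\<in>X.
      (if P x y = 0 then 0 else \<pi> x * P x y * ln (P x y / Q x y)))"

definition opt_partition :: "nat \<Rightarrow> nat \<Rightarrow> nat set set" where
  "opt_partition n k = (\<lambda>i. {i}) ` {1..<k} \<union> {{k..n}}"

end

theory Submission
  imports Defs
begin

text \<open>
  For a partition \<open>C\<close> with block masses \<open>m\<^sub>B\<close>, the divergence
  \<open>D\<^sup>\<pi>\<^sub>K\<^sub>L(G\<^sub>C \<parallel> \<Pi>)\<close> equals \<open>- \<Sum>\<^sub>B m\<^sub>B ln m\<^sub>B\<close>, so it suffices to show that
  \<open>\<Sum>\<^sub>B \<phi>(m\<^sub>B)\<close> is maximised by \<open>\<O>\<close> for the convex function \<open>\<phi>(x) = x ln x\<close>.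
  Let \<open>B\<close> be the block of the lightest point \<open>1\<close> and \<open>D\<close> any other block. Moving
  \<open>B - {1}\<close> into \<open>D\<close> replaces the masses \<open>(m\<^sub>B, m\<^sub>D)\<close> by the more spread pair
  \<open>(\<pi> 1, m\<^sub>B + m\<^sub>D - \<pi> 1)\<close>, because \<open>\<pi> 1 \<le> m\<^sub>D\<close>; by convexity this does not decrease
  \<open>\<Sum>\<^sub>B \<phi>(m\<^sub>B)\<close>. Now \<open>{1}\<close> is a block, and induction on the number of blocks
  applied to \<open>{2..n}\<close> finishes the argument.
\<close>

lemma block_of_eq:
  assumes "partition_on A P" "B \<in> P" "x \<in> B"
  shows "block_of P x = B"
  unfolding block_of_def
proof (rule the_equality)
  show "B \<in> P \<and> x \<in> B" using assms by blast
  show "D = B" if "D \<in> P \<and> x \<in> D" for D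
    using that assms partition_onD2[OF assms(1)] by (auto dest: disjointD)
qed

lemma pmass_pos:
  assumes "finite A" "\<forall>x\<in>A. \<pi> x > 0" "B \<subseteq> A" "B \<noteq> {}"
  shows "pmass \<pi> B > 0"
  unfolding pmass_def using assms by (intro sum_pos) (auto intro: finite_subset)

lemma pmass_nonneg:
  assumes "\<forall>x\<in>B. \<pi> x \<ge> 0"
  shows "pmass \<pi> B \<ge> 0"
  unfolding pmass_def using assms by (simp add: sum_nonneg)

lemma KL_pi_gibbs_kernel_Pi_mat:
  assumes fin: "finite A" and pos: "\<forall>x\<in>A. \<pi> x > 0" and part: "partition_on A P"
  shows "KL_pi A \<pi> (gibbs_kernel \<pi> P) (Pi_mat \<pi>)
       = - (\<Sum>B\<in>P. pmass \<pi> B * ln (pmass \<pi> B))"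
proof -
  let ?G = "gibbs_kernel \<pi> P"
  let ?term = "\<lambda>x y. if ?G x y = 0 then 0 else \<pi> x * ?G x y * ln (?G x y / Pi_mat \<pi> x y)"
  have row: "(\<Sum>y\<in>A. ?term x y) = - (\<pi> x * ln (pmass \<pi> B))" if B: "B \<in> P" "x \<in> B" for x B
  proof -
    have BA: "B \<subseteq> A" using part B(1) by (auto simp: partition_on_def)
    have m: "pmass \<pi> B > 0"
      using pmass_pos[OF fin pos BA] partition_onD3[OF part] B(1) by auto
    have "?term x y = (if y \<in> B then - (\<pi> x * \<pi> y / pmass \<pi> B * ln (pmass \<pi> B)) else 0)"
      if "y \<in> A" for y
      using pos that m
      by (auto simp: gibbs_kernel_def block_of_eq[OF part B] Pi_mat_def ln_div)
    then have "(\<Sum>y\<in>A. ?term x y) = (\<Sum>y\<in>B. - (\<pi> x * \<pi> y / pmass \<pi> B * ln (pmass \<pi> B)))"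
      using BA by (simp add: sum.inter_restrict[OF fin, symmetric] Int_absorb1)
    also have "\<dots> = - (\<pi> x * ln (pmass \<pi> B) * pmass \<pi> B / pmass \<pi> B)"
      by (simp add: pmass_def sum_negf sum_divide_distrib[symmetric]
          sum_distrib_left[symmetric] sum_distrib_right[symmetric] mult_ac)
    finally show ?thesis using m by simp
  qed
  have "KL_pi A \<pi> ?G (Pi_mat \<pi>) = (\<Sum>B\<in>P. \<Sum>x\<in>B. \<Sum>y\<in>A. ?term x y)"
    unfolding KL_pi_def by (rule sum.partition[OF fin part])
  also have "\<dots> = (\<Sum>B\<in>P. \<Sum>x\<in>B. - (\<pi> x * ln (pmass \<pi> B)))"
    using row by (intro sum.cong refl) auto
  finally show ?thesis
    by (simp add: sum_negf pmass_def sum_distrib_right)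
qed

lemma convex_on_x_ln_x: "convex_on {0<..} (\<lambda>x::real. x * ln x)"
proof (rule convex_on_realI[where f' = "\<lambda>x. ln x + 1"])
  show "((\<lambda>x. x * ln x) has_real_derivative ln x + 1) (at x)" if "x \<in> {0<..}" for x
    using that by (auto intro!: derivative_eq_intros)
qed auto

lemma convex_on_spread_le:
  fixes f :: "real \<Rightarrow> real"
  assumes "convex_on {a..d} f" "b \<in> {a..d}" "c \<in> {a..d}" "b + c = a + d"
  shows "f b + f c \<le> f a + f d"
proof -
  let ?s = "(f d - f a) / (d - a)"
  have "f b + f c \<le> ?s * (b - a) + ?s * (c - a) + 2 * f a"
    using convex_onD_Icc'[OF assms(1,2)] convex_onD_Icc'[OF assms(1,3)] by simp
  also have "\<dots> = ?s * ((b - a) + (c - a)) + 2 * f a"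
    by (simp only: distrib_left)
  also have "\<dots> = ?s * (d - a) + 2 * f a"
    using assms(4) by (simp add: algebra_simps)
  also have "\<dots> = f a + f d"
    by (cases "a = d") simp_all
  finally show ?thesis .
qed

definition isolate :: "'a \<Rightarrow> 'a set \<Rightarrow> 'a set \<Rightarrow> 'a set set \<Rightarrow> 'a set set" where
  "isolate x B D C = insert {x} (insert (B - {x} \<union> D) (C - {B, D}))"

lemma singleton_in_isolate: "{x} \<in> isolate x B D C"
  by (simp add: isolate_def)

context
  fixes A :: "'a set" and C :: "'a set set" and B D :: "'a set" and x :: 'a
  assumes part: "partition_on A C" and B: "B \<in> C" "x \<in> B" and D: "D \<in> C" "B \<noteq> D"
begin

private lemma disjoint_blocks: "X \<in> C \<Longrightarrow> Y \<in> C \<Longrightarrow> X \<noteq> Y \<Longrightarrow> X \<inter> Y = {}"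
  using partition_onD2[OF part] by (auto dest: disjointD)

private lemma blocks_nonempty: "X \<in> C \<Longrightarrow> X \<noteq> {}"
  using partition_onD3[OF part] by auto

lemma partition_on_isolate: "partition_on A (isolate x B D C)"
proof (rule partition_onI)
  show "\<Union>(isolate x B D C) = A"
    using partition_onD1[OF part] B D by (auto simp: isolate_def)
  show "{} \<notin> isolate x B D C"
    using blocks_nonempty D by (auto simp: isolate_def)
  have rest: "X \<inter> B = {}" "X \<inter> D = {}" if "X \<in> C - {B, D}" for X
    using that disjoint_blocks B(1) D(1) by auto
  have xD: "x \<notin> D" using disjoint_blocks[OF B(1) D] B(2) by blast
  have x_merged: "disjnt {x} (B - {x} \<union> D)" using xD by (auto simp: disjnt_def)
  have x_rest: "disjnt {x} X" if "X \<in> C - {B, D}" for X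
    using rest[OF that] B(2) by (auto simp: disjnt_def)
  have merged_rest: "disjnt (B - {x} \<union> D) X" if "X \<in> C - {B, D}" for X
    using rest[OF that] by (auto simp: disjnt_def)
  have rest_rest: "disjnt X Y" if "X \<in> C - {B, D}" "Y \<in> C - {B, D}" "X \<noteq> Y" for X Y
    using that disjoint_blocks[of X Y] by (auto simp: disjnt_def)
  show "disjnt X Y" if "X \<in> isolate x B D C" "Y \<in> isolate x B D C" "X \<noteq> Y" for X Y
    using that unfolding isolate_def
    by (auto intro: x_merged x_rest merged_rest rest_rest x_merged[THEN disjnt_sym]
        x_rest[THEN disjnt_sym] merged_rest[THEN disjnt_sym])
qed

private lemma isolate_fresh:
  shows "{x} \<notin> C - {B, D}" "B - {x} \<union> D \<notin> C - {B, D}" "{x} \<noteq> B - {x} \<union> D"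
proof -
  show "{x} \<notin> C - {B, D}"
    using disjoint_blocks[OF _ B(1)] B(2) by blast
  obtain y where y: "y \<in> D" using blocks_nonempty[OF D(1)] by blast
  then show "B - {x} \<union> D \<notin> C - {B, D}"
    using disjoint_blocks[OF _ D(1)] by blast
  show "{x} \<noteq> B - {x} \<union> D"
    using y disjoint_blocks[OF B(1) D] B(2) by auto
qed

private lemma blocks_eq_insert: "C = insert B (insert D (C - {B, D}))"
  using B D by blast

lemma card_isolate: "finite C \<Longrightarrow> card (isolate x B D C) = card C"
  using isolate_fresh D(2) by (subst (2) blocks_eq_insert) (simp add: isolate_def)

lemma sum_isolate:
  "finite C \<Longrightarrow> (\<Sum>X\<in>isolate x B D C. g X) + g B + g D
     = (\<Sum>X\<in>C. g X) + g {x} + g (B - {x} \<union> D)"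
  using isolate_fresh D(2) by (subst (2) blocks_eq_insert) (simp add: isolate_def ac_simps)

end

lemma sum_convex_pmass_isolate_ge:
  assumes f: "convex_on {0<..} f" and fin: "finite A" and part: "partition_on A C"
    and B: "B \<in> C" "x \<in> B" and D: "D \<in> C" "B \<noteq> D"
    and pos: "\<forall>y\<in>A. \<pi> y > 0" and light: "\<pi> x \<le> pmass \<pi> D"
  shows "(\<Sum>X\<in>C. f (pmass \<pi> X)) \<le> (\<Sum>X\<in>isolate x B D C. f (pmass \<pi> X))"
proof -
  have sub: "X \<subseteq> A" if "X \<in> C" for X using part that by (auto simp: partition_on_def)
  have finC: "finite C" using finite_elements[OF fin part] .
  have fins: "finite B" "finite D" using sub B(1) D(1) fin by (auto intro: finite_subset)
  have BD: "B \<inter> D = {}" using partition_onD2[OF part] B(1) D by (auto dest: disjointD)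
  let ?R = "pmass \<pi> (B - {x})"
  have R: "?R \<ge> 0" using pos sub[OF B(1)] by (intro pmass_nonneg) (auto intro: less_imp_le)
  have mB: "pmass \<pi> B = \<pi> x + ?R"
    using fins B(2) by (simp add: pmass_def sum.remove)
  have mBD: "pmass \<pi> (B - {x} \<union> D) = ?R + pmass \<pi> D"
    using fins BD unfolding pmass_def by (subst sum.union_disjoint) auto
  have "\<pi> x > 0" using pos sub[OF B(1)] B(2) by auto
  then have "{\<pi> x..?R + pmass \<pi> D} \<subseteq> {0<..}" by auto
  then have "convex_on {\<pi> x..?R + pmass \<pi> D} f" by (rule convex_on_subset[OF f]) simp
  then have "f (pmass \<pi> B) + f (pmass \<pi> D) \<le> f (\<pi> x) + f (pmass \<pi> (B - {x} \<union> D))"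
    unfolding mB mBD using R light by (intro convex_on_spread_le) auto
  moreover have "pmass \<pi> {x} = \<pi> x" by (simp add: pmass_def)
  ultimately show ?thesis
    using sum_isolate[OF part B D finC, of "\<lambda>X. f (pmass \<pi> X)"] by simp
qed

lemma partition_on_remove_singleton:
  assumes "partition_on A C" "{x} \<in> C"
  shows "partition_on (A - {x}) (C - {{x}})"
proof -
  have "disjnt {x} (\<Union>(C - {{x}}))"
    using partition_onD2[OF assms(1)] assms(2) by (auto simp: disjnt_def dest: disjointD)
  moreover have "C = insert {x} (C - {{x}})" using assms(2) by blast
  ultimately show ?thesis using assms(1) partition_on_insert by metis
qed

lemma sum_convex_pmass_le_initial_singletons:
  fixes f :: "real \<Rightarrow> real" and \<pi> :: "nat \<Rightarrow> real"
  assumes f: "convex_on {0<..} f"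
    and pos: "\<forall>x\<in>{j..n}. \<pi> x > 0"
    and mono: "\<forall>x y. j \<le> x \<and> x \<le> y \<and> y \<le> n \<longrightarrow> \<pi> x \<le> \<pi> y"
    and part: "partition_on {j..n} C" and card: "card C = Suc m"
  shows "(\<Sum>X\<in>C. f (pmass \<pi> X)) \<le> (\<Sum>i\<in>{j..<j+m}. f (\<pi> i)) + f (pmass \<pi> {j+m..n})"
  using pos mono part card
proof (induction m arbitrary: j C)
  case 0
  then obtain X where "C = {X}" by (auto simp: card_Suc_eq)
  then show ?case using partition_onD1[OF "0.prems"(3)] by simp
next
  case (Suc m)
  have finC: "finite C" using finite_elements[OF _ Suc.prems(3)] by simp
  have block_sub: "X \<subseteq> {j..n}" if "X \<in> C" for X
    using partition_onD1[OF Suc.prems(3)] that by blast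
  have "C \<noteq> {}" using Suc.prems(4) by auto
  then have "{j..n} \<noteq> {}" using Suc.prems(3) by (metis partition_on_empty)
  then have "j \<in> {j..n}" by simp
  then have "j \<in> \<Union>C" using partition_onD1[OF Suc.prems(3)] by simp
  then obtain B where B: "B \<in> C" "j \<in> B" by blast
  have "\<not> C \<subseteq> {B}" using card_mono[of "{B}" C] Suc.prems(4) by auto
  then obtain D where D: "D \<in> C" "B \<noteq> D" by blast
  obtain y where y: "y \<in> D"
    using partition_onD3[OF Suc.prems(3)] D(1) by (metis ex_in_conv)
  have "\<pi> j \<le> \<pi> y" using block_sub[OF D(1)] y Suc.prems(2) by auto
  also have "\<pi> y \<le> pmass \<pi> D"
    unfolding pmass_def using Suc.prems(1) block_sub[OF D(1)] y
    by (intro member_le_sum) (auto intro: less_imp_le finite_subset)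
  finally have light: "\<pi> j \<le> pmass \<pi> D" .
  let ?C' = "isolate j B D C"
  have part': "partition_on {j..n} ?C'" using partition_on_isolate[OF Suc.prems(3) B D] .
  have "{j..n} - {j} = {Suc j..n}" by auto
  then have part'': "partition_on {Suc j..n} (?C' - {{j}})"
    using partition_on_remove_singleton[OF part' singleton_in_isolate] by simp
  have "card (?C' - {{j}}) = Suc m"
    using card_isolate[OF Suc.prems(3) B D finC] Suc.prems(4)
    by (simp add: card_Diff_singleton[OF singleton_in_isolate])
  then have IH: "(\<Sum>X\<in>?C' - {{j}}. f (pmass \<pi> X))
      \<le> (\<Sum>i\<in>{Suc j..<Suc j+m}. f (\<pi> i)) + f (pmass \<pi> {Suc j+m..n})"
    using Suc.IH[OF _ _ part''] Suc.prems(1,2) by simp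
  have "(\<Sum>X\<in>C. f (pmass \<pi> X)) \<le> (\<Sum>X\<in>?C'. f (pmass \<pi> X))"
    using sum_convex_pmass_isolate_ge[OF f _ Suc.prems(3) B D Suc.prems(1) light] by simp
  also have "\<dots> = f (\<pi> j) + (\<Sum>X\<in>?C' - {{j}}. f (pmass \<pi> X))"
    by (subst sum.remove[OF _ singleton_in_isolate]) (simp_all add: isolate_def finC pmass_def)
  also have "\<dots> \<le> f (\<pi> j) + (\<Sum>i\<in>{Suc j..<Suc j+m}. f (\<pi> i)) + f (pmass \<pi> {Suc j+m..n})"
    using IH by simp
  also have "\<dots> = (\<Sum>i\<in>{j..<j + Suc m}. f (\<pi> i)) + f (pmass \<pi> {j + Suc m..n})"
    by (subst (2) sum.atLeast_Suc_lessThan) simp_all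
  finally show ?case .
qed

theorem proposition7p1:
  fixes n k :: nat and \<pi> :: "nat \<Rightarrow> real" and C :: "nat set set"
  assumes pos: "\<forall>x\<in>{1..n}. \<pi> x > 0"
    and sum1: "(\<Sum>x\<in>{1..n}. \<pi> x) = 1"
    and ord: "\<forall>i j. 1 \<le> i \<and> i \<le> j \<and> j \<le> n \<longrightarrow> \<pi> i \<le> \<pi> j"
    and k: "1 \<le> k" "k \<le> n"
    and part: "partition_on {1..n} C"
    and cardC: "card C = k"
  shows "KL_pi {1..n} \<pi> (gibbs_kernel \<pi> (opt_partition n k)) (Pi_mat \<pi>)
         \<le> KL_pi {1..n} \<pi> (gibbs_kernel \<pi> C) (Pi_mat \<pi>)"
proof -
  obtain m where m: "k = Suc m" using k(1) by (cases k) auto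
  let ?\<phi> = "\<lambda>x::real. x * ln x"
  have part_opt: "partition_on {1..n} (opt_partition n k)"
    using k by (intro partition_onI) (auto simp: opt_partition_def disjnt_def)
  have "{k..n} \<notin> (\<lambda>i. {i}) ` {1..<k}" using k by auto
  then have opt: "(\<Sum>B\<in>opt_partition n k. ?\<phi> (pmass \<pi> B))
      = (\<Sum>i\<in>{1..<1+m}. ?\<phi> (\<pi> i)) + ?\<phi> (pmass \<pi> {1+m..n})"
    by (simp add: opt_partition_def m sum.reindex pmass_def add.commute)
  have "(\<Sum>B\<in>C. ?\<phi> (pmass \<pi> B)) \<le> (\<Sum>B\<in>opt_partition n k. ?\<phi> (pmass \<pi> B))"
    unfolding opt using ord cardC m
    by (intro sum_convex_pmass_le_initial_singletons[OF convex_on_x_ln_x pos _ part]) auto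
  then show ?thesis
    unfolding KL_pi_gibbs_kernel_Pi_mat[OF finite_atLeastAtMost pos part_opt]
      KL_pi_gibbs_kernel_Pi_mat[OF finite_atLeastAtMost pos part] by simp
qed

end
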